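(* Let $G$ be a finite graph with $\nabla(G) = k$. Then $\kappa(G)\leq k+1$.
   Context: For a graph $G$, a set $S\subseteq V(G)$ is a decycling set of $G$ if $G - S$ is acyclic (a forest). The decycling number $\nabla(G)$ is the smallest size of a decycling set of $G$. $\kappa(G)$ denotes the (vertex) connectivity of $G$. *)

theory Defs
  imports Main
begin

definition sgraph :: "'a set \<Rightarrow> ('a \<Rightarrow> 'a \<Rightarrow> bool) \<Rightarrow> bool" where
  "sgraph V E \<longleftrightarrow> finite V \<and> (\<forall>x y. E x y \<longrightarrow> x \<in> V \<and> y \<in> V)
     \<and> (\<forall>x y. E x y \<longrightarrow> E y x) \<and> (\<forall>x. \<not> E x x)"

definition walk_in :: "'a set \<Rightarrow> ('a \<Rightarrow> 'a \<Rightarrow> bool) \<Rightarrow> 'a list \<Rightarrow> bool" where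
  "walk_in W E xs \<longleftrightarrow> xs \<noteq> [] \<and> set xs \<subseteq> W
     \<and> (\<forall>i. Suc i < length xs \<longrightarrow> E (xs ! i) (xs ! Suc i))"

definition connected_on :: "'a set \<Rightarrow> ('a \<Rightarrow> 'a \<Rightarrow> bool) \<Rightarrow> bool" where
  "connected_on W E \<longleftrightarrow> (\<forall>x\<in>W. \<forall>y\<in>W. \<exists>xs. walk_in W E xs \<and> hd xs = x \<and> last xs = y)"

definition has_cycle :: "'a set \<Rightarrow> ('a \<Rightarrow> 'a \<Rightarrow> bool) \<Rightarrow> bool" where
  "has_cycle W E \<longleftrightarrow> (\<exists>xs. walk_in W E xs \<and> distinct xs \<and> length xs \<ge> 3 \<and> E (last xs) (hd xs))"

definition decycling_set :: "'a set \<Rightarrow> ('a \<Rightarrow> 'a \<Rightarrow> bool) \<Rightarrow> 'a set \<Rightarrow> bool" where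
  "decycling_set V E S \<longleftrightarrow> S \<subseteq> V \<and> \<not> has_cycle (V - S) E"

definition decycling_number :: "'a set \<Rightarrow> ('a \<Rightarrow> 'a \<Rightarrow> bool) \<Rightarrow> nat" where
  "decycling_number V E = Min {card S | S. decycling_set V E S}"

definition connectivity :: "'a set \<Rightarrow> ('a \<Rightarrow> 'a \<Rightarrow> bool) \<Rightarrow> nat" where
  "connectivity V E = Min {card S | S. S \<subseteq> V \<and> (\<not> connected_on (V - S) E \<or> card (V - S) \<le> 1)}"

end

theory Submission
  imports Defs
begin

text \<open>Let S be a minimum decycling set, so |S| = k and G - S is a forest. If G - S is empty,
  S itself witnesses the bound. Otherwise an end x of a longest path in G - S has at most one
  neighbour there (any other neighbour would extend the path or close a cycle); adding that
  neighbour to S yields at most k + 1 vertices whose removal leaves x isolated.\<close>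

lemma walk_in_Cons:
  assumes "walk_in W E xs" "y \<in> W" "E y (hd xs)"
  shows "walk_in W E (y # xs)"
  unfolding walk_in_def
proof (intro conjI allI impI)
  fix i assume i: "Suc i < length (y # xs)"
  show "E ((y # xs) ! i) ((y # xs) ! Suc i)"
  proof (cases i)
    case 0
    then show ?thesis using assms by (simp add: walk_in_def hd_conv_nth)
  next
    case (Suc j)
    then show ?thesis using assms(1) i by (simp add: walk_in_def)
  qed
qed (use assms in \<open>auto simp: walk_in_def\<close>)

lemma has_cycle_if_back_edge:
  assumes walk: "walk_in W E xs" and "distinct xs"
    and "2 \<le> j" "j < length xs" and "E (xs ! j) (hd xs)"
  shows "has_cycle W E"
proof -
  define ys where "ys = take (Suc j) xs"
  have "walk_in W E ys"
    using walk \<open>j < length xs\<close> unfolding walk_in_def ys_def by (auto dest: in_set_takeD)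
  moreover have "distinct ys" "length ys \<ge> 3"
    using assms unfolding ys_def by auto
  moreover have "last ys = xs ! j" "hd ys = hd xs"
    using walk \<open>j < length xs\<close> unfolding ys_def walk_in_def by (auto simp: last_conv_nth)
  ultimately show ?thesis
    using assms(5) unfolding has_cycle_def by metis
qed

lemma longest_path_exists:
  assumes "finite W" "x \<in> W"
  obtains xs where "walk_in W E xs" "distinct xs"
    "\<And>ys. walk_in W E ys \<Longrightarrow> distinct ys \<Longrightarrow> length ys \<le> length xs"
proof -
  define P where "P = {xs. walk_in W E xs \<and> distinct xs}"
  have "P \<subseteq> {xs. set xs \<subseteq> W \<and> length xs \<le> card W}"
    unfolding P_def walk_in_def using assms(1)
    by (auto simp: distinct_card[symmetric] intro: card_mono)
  then have "finite (length ` P)"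
    using finite_lists_length_le[OF assms(1)] by (meson finite_imageI finite_subset)
  moreover have "[x] \<in> P"
    using assms(2) unfolding P_def walk_in_def by auto
  ultimately have "Max (length ` P) \<in> length ` P"
    by (intro Max_in) auto
  then obtain xs where "xs \<in> P" "length xs = Max (length ` P)"
    by auto
  then show thesis
    using that \<open>finite (length ` P)\<close> unfolding P_def by (metis (mono_tags) Max_ge imageI mem_Collect_eq)
qed

lemma acyclic_has_vertex_degree_le_1:
  assumes "finite W" "W \<noteq> {}" "\<not> has_cycle W E"
    and sym: "\<And>x y. E x y \<Longrightarrow> E y x" and irrefl: "\<And>x. \<not> E x x"
  obtains x where "x \<in> W" "card {y \<in> W. E x y} \<le> 1"
proof -
  obtain x0 where "x0 \<in> W"
    using assms(2) by blast
  obtain xs where walk: "walk_in W E xs" and "distinct xs"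
    and longest: "\<And>ys. walk_in W E ys \<Longrightarrow> distinct ys \<Longrightarrow> length ys \<le> length xs"
    using longest_path_exists[OF assms(1) \<open>x0 \<in> W\<close>, where E = E] by blast
  have "xs \<noteq> []" "hd xs \<in> W" "hd xs = xs ! 0"
    using walk unfolding walk_in_def by (auto simp: hd_conv_nth)
  have "y = xs ! 1" if "y \<in> W" "E (hd xs) y" for y
  proof -
    have "y \<in> set xs"
    proof (rule ccontr)
      assume "y \<notin> set xs"
      then have "walk_in W E (y # xs)" "distinct (y # xs)"
        using walk_in_Cons[OF walk] that sym \<open>distinct xs\<close> by auto
      then show False
        using longest by fastforce
    qed
    then obtain j where j: "j < length xs" "y = xs ! j"
      by (auto simp: in_set_conv_nth)
    have "j \<noteq> 0"
      using j that(2) irrefl \<open>hd xs = xs ! 0\<close> by metis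
    moreover have "\<not> 2 \<le> j"
      using has_cycle_if_back_edge[OF walk \<open>distinct xs\<close> _ j(1)] j(2) that(2) sym assms(3) by blast
    ultimately show ?thesis
      using j by (metis One_nat_def less_2_cases not_le)
  qed
  then have "card {y \<in> W. E (hd xs) y} \<le> card {xs ! 1}"
    by (intro card_mono) auto
  then show thesis
    using that \<open>hd xs \<in> W\<close> by simp
qed

lemma isolated_vertex_not_connected:
  assumes "x \<in> W" "y \<in> W" "x \<noteq> y" "\<And>z. z \<in> W \<Longrightarrow> \<not> E x z"
  shows "\<not> connected_on W E"
proof
  assume "connected_on W E"
  then obtain zs where walk: "walk_in W E zs" and "hd zs = x" "last zs = y"
    using assms(1,2) unfolding connected_on_def by blast
  then have "1 < length zs"
    using assms(3) walk unfolding walk_in_def by (cases zs) auto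
  then have "E (zs ! 0) (zs ! 1)" "zs ! 1 \<in> W" "zs ! 0 = x"
    using walk \<open>hd zs = x\<close> unfolding walk_in_def by (auto simp: hd_conv_nth)
  then show False
    using assms(4) by blast
qed

lemma isolated_vertex_disconnects:
  assumes "finite W" "x \<in> W" "\<And>z. z \<in> W \<Longrightarrow> \<not> E x z"
  shows "\<not> connected_on W E \<or> card W \<le> 1"
  using isolated_vertex_not_connected[of x W] assms
  by (metis card_le_Suc0_iff_eq One_nat_def)

lemma connectivity_le_card:
  assumes "finite V" "T \<subseteq> V" "\<not> connected_on (V - T) E \<or> card (V - T) \<le> 1"
  shows "connectivity V E \<le> card T"
proof -
  have "{card S | S. S \<subseteq> V \<and> (\<not> connected_on (V - S) E \<or> card (V - S) \<le> 1)} \<subseteq> card ` Pow V"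
    by auto
  then have "finite {card S | S. S \<subseteq> V \<and> (\<not> connected_on (V - S) E \<or> card (V - S) \<le> 1)}"
    using assms(1) by (meson finite_Pow_iff finite_imageI finite_subset)
  then show ?thesis
    unfolding connectivity_def using assms by (intro Min_le) auto
qed

lemma decycling_number_attained:
  assumes "finite V"
  obtains S where "decycling_set V E S" "card S = decycling_number V E"
proof -
  let ?N = "{card S | S. decycling_set V E S}"
  have "?N \<subseteq> card ` Pow V"
    unfolding decycling_set_def by auto
  then have "finite ?N"
    using assms by (meson finite_Pow_iff finite_imageI finite_subset)
  moreover have "decycling_set V E V"
    unfolding decycling_set_def has_cycle_def walk_in_def by auto
  ultimately have "decycling_number V E \<in> ?N"
    unfolding decycling_number_def by (intro Min_in) auto
  then show thesis
    using that by auto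
qed

lemma decycling_set_extends_to_separator:
  assumes "sgraph V E" "decycling_set V E S"
  obtains T where "T \<subseteq> V" "card T \<le> card S + 1"
    "\<not> connected_on (V - T) E \<or> card (V - T) \<le> 1"
proof (cases "V - S = {}")
  case True
  then have "card (V - S) \<le> 1"
    by (metis card.empty zero_le)
  then show thesis
    using that[of S] assms(2) unfolding decycling_set_def by simp
next
  case False
  have fin: "finite V" and sym: "\<And>x y. E x y \<Longrightarrow> E y x" and irrefl: "\<And>x. \<not> E x x"
    using assms(1) unfolding sgraph_def by auto
  obtain x where x: "x \<in> V - S" and leaf: "card {y \<in> V - S. E x y} \<le> 1"
    using acyclic_has_vertex_degree_le_1[of "V - S" E] False fin sym irrefl assms(2)
    unfolding decycling_set_def by blast
  define T where "T = S \<union> {y \<in> V - S. E x y}"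
  have "T \<subseteq> V"
    using assms(2) unfolding T_def decycling_set_def by blast
  moreover have "card T \<le> card S + 1"
    using card_Un_le[of S "{y \<in> V - S. E x y}"] leaf unfolding T_def by linarith
  moreover have "x \<in> V - T"
    using x irrefl unfolding T_def by blast
  moreover have "\<not> E x z" if "z \<in> V - T" for z
    using that unfolding T_def by blast
  ultimately show thesis
    using that isolated_vertex_disconnects[of "V - T"] fin by blast
qed

theorem mainTheorem2:
  fixes V :: "'a set" and E :: "'a \<Rightarrow> 'a \<Rightarrow> bool" and k :: nat
  assumes "sgraph V E"
    and "decycling_number V E = k"
  shows "connectivity V E \<le> k + 1"
proof -
  have "finite V"
    using assms(1) unfolding sgraph_def by blast
  then obtain S where "decycling_set V E S" "card S = k"
    using decycling_number_attained assms(2) by metis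
  then obtain T where "T \<subseteq> V" "card T \<le> k + 1"
    "\<not> connected_on (V - T) E \<or> card (V - T) \<le> 1"
    using decycling_set_extends_to_separator assms(1) by metis
  then show ?thesis
    using connectivity_le_card[OF \<open>finite V\<close>] by (meson le_trans)
qed

end
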